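(* For every formula $\varphi$, path $\pi$, avoiding function $\eta$ and $i\in\mathbb{N}$, the sequence $\big((\pi^i\models\mathcal{L}_t\varphi)\big)_{t\in\mathbb{N}}$ is nonincreasing and converges to $(\pi^i\models\mathcal{G}\varphi)$. Moreover, for every $t\in\mathbb{N}$, $$(\pi^i\models\mathcal{G}_t\varphi)\le(\pi^i\models\mathcal{L}_t\varphi)\le(\pi^i\models\mathcal{AG}_t\varphi).$$
   Context: Fix an interpretation of the connectives: a t-norm $\otimes$ and a t-conorm $\oplus$ on $[0,1]$ (commutative, associative binary operations, nondecreasing in each argument, with neutral element $1$ resp. $0$; $\otimes$ continuous), a negation and an implication. An avoiding function is $\eta:\mathbb{Z}\to[0,1]$ with $\eta(k)=1$ for $k\le0$, such that for some $n_\eta\in\mathbb{N}$, $\eta$ is strictly decreasing on $\{0,\dots,n_\eta\}$ and $\eta(k)=0$ for $k\ge n_\eta$. A linear time structure is $(S,s_0,\pi,L)$ with $\pi\in S^\omega$ and fuzzy labeling $L:S\to[0,1]^{AP}$; $\pi^i$ is the suffix from position $i$, and truth degrees $(\pi^i\models\varphi)\in[0,1]$ are defined recursively. $(\pi^i\models\mathcal{G}_t\varphi)=\bigotimes_{j=i}^{i+t}(\pi^j\models\varphi)$, $(\pi^i\models\mathcal{G}\varphi)=\lim_{t\to\infty}(\pi^i\models\mathcal{G}_t\varphi)$. With $I_t=\{0,\dots,t\}$, $(\pi^i\models\mathcal{AG}_t\varphi)=\max_{j\in I_t}\max_{H\subseteq I_t,|H|=t+1-j}\big(\bigotimes_{h\in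 H}(\pi^{i+h}\models\varphi)\big)\cdot\eta(j)$. The "lasts" operator is $(\pi^i\models\mathcal{L}_t\varphi)=\max_{0\le j\le\min\{t,n_\eta-1\}}(\pi^i\models\mathcal{G}_{t-j}\varphi)\cdot\eta(j)$; here $\cdot$ is ordinary multiplication. *)

theory Defs
  imports "HOL-Analysis.Analysis"
begin

definition tnorm :: "(real \<Rightarrow> real \<Rightarrow> real) \<Rightarrow> bool" where
  "tnorm T \<longleftrightarrow>
     (\<forall>x\<in>{0..1}. \<forall>y\<in>{0..1}. T x y \<in> {0..1}) \<and>
     (\<forall>x\<in>{0..1}. \<forall>y\<in>{0..1}. T x y = T y x) \<and>
     (\<forall>x\<in>{0..1}. \<forall>y\<in>{0..1}. \<forall>z\<in>{0..1}. T (T x y) z = T x (T y z)) \<and>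
     (\<forall>x\<in>{0..1}. \<forall>x'\<in>{0..1}. \<forall>y\<in>{0..1}. x \<le> x' \<longrightarrow> T x y \<le> T x' y) \<and>
     (\<forall>x\<in>{0..1}. T x 1 = x) \<and>
     continuous_on ({0..1} \<times> {0..1}) (\<lambda>(x, y). T x y)"

definition tnorm_set :: "(real \<Rightarrow> real \<Rightarrow> real) \<Rightarrow> (nat \<Rightarrow> real) \<Rightarrow> nat set \<Rightarrow> real" where
  "tnorm_set T f H = foldr (\<lambda>h acc. T (f h) acc) (sorted_list_of_set H) 1"

definition avoiding :: "(int \<Rightarrow> real) \<Rightarrow> nat \<Rightarrow> bool" where
  "avoiding \<eta> n \<longleftrightarrow>
     (\<forall>k. \<eta> k \<in> {0..1}) \<and>
     (\<forall>k\<le>0. \<eta> k = 1) \<and>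
     (\<forall>j k. 0 \<le> j \<longrightarrow> j < k \<longrightarrow> k \<le> int n \<longrightarrow> \<eta> k < \<eta> j) \<and>
     (\<forall>k\<ge>int n. \<eta> k = 0)"

text \<open>In what follows, sat stands for the function
  j \<mapsto> (pi^j |= phi), the truth degrees of a fixed formula along the suffixes of a path.\<close>

definition G_t :: "(real \<Rightarrow> real \<Rightarrow> real) \<Rightarrow> (nat \<Rightarrow> real) \<Rightarrow> nat \<Rightarrow> nat \<Rightarrow> real" where
  "G_t T sat i t = tnorm_set T sat {i..i+t}"

definition G_op :: "(real \<Rightarrow> real \<Rightarrow> real) \<Rightarrow> (nat \<Rightarrow> real) \<Rightarrow> nat \<Rightarrow> real" where
  "G_op T sat i = lim (\<lambda>t. G_t T sat i t)"

definition AG_t :: "(real \<Rightarrow> real \<Rightarrow> real) \<Rightarrow> (int \<Rightarrow> real) \<Rightarrow> (nat \<Rightarrow> real) \<Rightarrow> nat \<Rightarrow> nat \<Rightarrow> real" where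
  "AG_t T \<eta> sat i t =
     Max {tnorm_set T (\<lambda>h. sat (i + h)) H * \<eta> (int j) | j H.
            j \<in> {0..t} \<and> H \<subseteq> {0..t} \<and> card H = t + 1 - j}"

definition L_t :: "(real \<Rightarrow> real \<Rightarrow> real) \<Rightarrow> (int \<Rightarrow> real) \<Rightarrow> nat \<Rightarrow> (nat \<Rightarrow> real) \<Rightarrow> nat \<Rightarrow> nat \<Rightarrow> real" where
  "L_t T \<eta> n sat i t = Max {G_t T sat i (t - j) * \<eta> (int j) | j. j \<le> min t (n - 1)}"

end

theory Submission
  imports Defs
begin

text \<open>
  Write g t = (pi^i |= G_t phi).  Because the t-norm is bounded by 1 and
  monotone, appending one more conjunct can only lower an iterated t-norm, so g is a
  nonincreasing sequence in [0,1]; hence it converges, and its limit is (pi^i |= G phi).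
  The "lasts" operator only depends on g: L_t = max over j <= min t (n_eta - 1) of
  g (t - j) * eta j.  For an arbitrary nonincreasing [0,1]-sequence g this transform is
  (a) at least g t (take j = 0, eta 0 = 1), (b) nonincreasing in t (the term for j + 1 at
  time t + 1 is dominated by the term for j at time t, since eta is antitone), and
  (c) at most g (t - n_eta + 1), because every term is at most g (t - j).  By (a), (c) and
  the squeeze theorem it converges to the limit of g.  Finally each term g (t - j) * eta j
  occurs in the maximum defining AG_t (take H = {0..t-j}), giving L_t <= AG_t.
\<close>

lemma tnorm_closed:
  assumes "tnorm T" "x \<in> {0..1}" "y \<in> {0..1}"
  shows "T x y \<in> {0..1}"
  using assms unfolding tnorm_def by blast

lemma tnorm_one_right:
  assumes "tnorm T" "x \<in> {0..1}"
  shows "T x 1 = x"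
  using assms unfolding tnorm_def by blast

text \<open>Monotonicity in the second argument follows from commutativity and monotonicity
  in the first one.\<close>
lemma tnorm_mono_right:
  assumes "tnorm T" "x \<in> {0..1}" "y \<in> {0..1}" "y' \<in> {0..1}" "y \<le> y'"
  shows "T x y \<le> T x y'"
proof -
  have "T x y = T y x" "T x y' = T y' x"
    using assms unfolding tnorm_def by blast+
  moreover have "T y x \<le> T y' x"
    using assms unfolding tnorm_def by blast
  ultimately show ?thesis by simp
qed

lemma avoiding_zero: "avoiding \<eta> n \<Longrightarrow> \<eta> 0 = 1"
  unfolding avoiding_def by simp

lemma avoiding_range: "avoiding \<eta> n \<Longrightarrow> \<eta> k \<in> {0..1}"
  unfolding avoiding_def by simp

lemma avoiding_antitone:
  assumes "avoiding \<eta> n" "j \<le> k"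
  shows "\<eta> (int k) \<le> \<eta> (int j)"
proof (cases "j = k \<or> n \<le> k")
  case True
  then show ?thesis
    using assms unfolding avoiding_def by auto
next
  case False
  then have "int j < int k" "int k \<le> int n"
    using assms(2) by auto
  then show ?thesis
    using assms(1) unfolding avoiding_def by (meson less_imp_le of_nat_0_le_iff)
qed

lemma tnorm_fold_range:
  assumes "tnorm T" "\<forall>j. sat j \<in> {0..1}" "a \<in> {0..1}"
  shows "foldr (\<lambda>h acc. T (sat h) acc) xs a \<in> {0..1}"
proof (induction xs)
  case (Cons x xs)
  then show ?case
    using assms(1,2) tnorm_closed[of T "sat x"] by simp
qed (use assms(3) in simp)

lemma tnorm_fold_mono:
  assumes "tnorm T" "\<forall>j. sat j \<in> {0..1}" "a \<in> {0..1}" "b \<in> {0..1}" "a \<le> b"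
  shows "foldr (\<lambda>h acc. T (sat h) acc) xs a \<le> foldr (\<lambda>h acc. T (sat h) acc) xs b"
proof (induction xs)
  case Nil
  then show ?case using assms by simp
next
  case (Cons x xs)
  have "foldr (\<lambda>h acc. T (sat h) acc) xs a \<in> {0..1}" "foldr (\<lambda>h acc. T (sat h) acc) xs b \<in> {0..1}"
    using assms(1-4) by (blast intro: tnorm_fold_range)+
  then show ?case
    using Cons assms(1,2) by (simp add: tnorm_mono_right)
qed

lemma G_t_unfold: "G_t T sat i t = foldr (\<lambda>h acc. T (sat h) acc) [i..<Suc (i + t)] 1"
  unfolding G_t_def tnorm_set_def
  by (simp add: atLeastLessThanSuc_atLeastAtMost[symmetric])

text \<open>G_t is the iterated t-norm over the shifted window {0..t} of the suffix pi^i;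
  this is the form in which it appears inside AG_t.\<close>
lemma G_t_shift: "tnorm_set T (\<lambda>h. sat (i + h)) {0..t} = G_t T sat i t"
proof -
  have "[i..<Suc (i + t)] = map (\<lambda>h. h + i) [0..<Suc t]"
    using map_add_upt[of i "Suc t"] by (simp add: add.commute)
  then show ?thesis
    unfolding G_t_unfold tnorm_set_def
    by (simp add: atLeastLessThanSuc_atLeastAtMost[symmetric] foldr_map o_def add.commute)
qed

lemma G_t_range:
  assumes "tnorm T" "\<forall>j. sat j \<in> {0..1}"
  shows "G_t T sat i t \<in> {0..1}"
  unfolding G_t_unfold using assms by (intro tnorm_fold_range) auto

lemma G_t_decseq:
  assumes "tnorm T" "\<forall>j. sat j \<in> {0..1}"
  shows "decseq (G_t T sat i)"
proof (rule decseq_SucI)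
  fix t
  let ?F = "\<lambda>a. foldr (\<lambda>h acc. T (sat h) acc) [i..<Suc (i + t)] a"
  have "G_t T sat i (Suc t) = ?F (T (sat (Suc (i + t))) 1)"
    unfolding G_t_unfold by simp
  also have "\<dots> = ?F (sat (Suc (i + t)))"
    using tnorm_one_right[OF assms(1)] assms(2) by metis
  also have "\<dots> \<le> ?F 1"
    using assms by (intro tnorm_fold_mono) auto
  finally show "G_t T sat i (Suc t) \<le> G_t T sat i t"
    unfolding G_t_unfold .
qed

lemma G_t_tendsto_G_op:
  assumes "tnorm T" "\<forall>j. sat j \<in> {0..1}"
  shows "G_t T sat i \<longlonglongrightarrow> G_op T sat i"
proof -
  have "\<forall>t. 0 \<le> G_t T sat i t"
    using G_t_range[OF assms] by simp
  then obtain l where "G_t T sat i \<longlonglongrightarrow> l"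
    using decseq_convergent[OF G_t_decseq[OF assms]] by blast
  then have "convergent (G_t T sat i)"
    by (auto simp: convergent_def)
  then show ?thesis
    unfolding G_op_def by (simp add: convergent_LIMSEQ_iff)
qed

text \<open>The lasts operator tolerates that the last j observations fail, at the price of
  the discount eta j.  It makes sense for any sequence g.\<close>
definition lasts :: "(int \<Rightarrow> real) \<Rightarrow> nat \<Rightarrow> (nat \<Rightarrow> real) \<Rightarrow> nat \<Rightarrow> real" where
  "lasts \<eta> n g t = Max ((\<lambda>j. g (t - j) * \<eta> (int j)) ` {..min t (n - 1)})"

lemma L_t_eq_lasts: "L_t T \<eta> n sat i t = lasts \<eta> n (G_t T sat i) t"
proof -
  have "{G_t T sat i (t - j) * \<eta> (int j) | j. j \<le> min t (n - 1)}
      = (\<lambda>j. G_t T sat i (t - j) * \<eta> (int j)) ` {..min t (n - 1)}"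
    by auto
  then show ?thesis
    unfolding L_t_def lasts_def by simp
qed

lemma lasts_ge_term: "j \<le> min t (n - 1) \<Longrightarrow> g (t - j) * \<eta> (int j) \<le> lasts \<eta> n g t"
  unfolding lasts_def by (rule Max_ge) auto

lemma lasts_le:
  "(\<And>j. j \<le> min t (n - 1) \<Longrightarrow> g (t - j) * \<eta> (int j) \<le> c) \<Longrightarrow> lasts \<eta> n g t \<le> c"
  unfolding lasts_def by (subst Max_le_iff) auto

lemma lasts_ge_self: "avoiding \<eta> n \<Longrightarrow> g t \<le> lasts \<eta> n g t"
  using lasts_ge_term[of 0 t n g \<eta>] avoiding_zero[of \<eta> n] by simp

text \<open>The term for shift j + 1 at time t + 1 is dominated by the term for shift j at
  time t, so the transform of a nonincreasing nonnegative sequence is nonincreasing.\<close>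
lemma lasts_decseq:
  assumes "avoiding \<eta> n" "decseq g" "\<And>t. 0 \<le> g t"
  shows "decseq (lasts \<eta> n g)"
proof (rule decseq_SucI, rule lasts_le)
  fix t j assume j: "j \<le> min (Suc t) (n - 1)"
  show "g (Suc t - j) * \<eta> (int j) \<le> lasts \<eta> n g t"
  proof (cases j)
    case 0
    have "g (Suc t) \<le> g t" using assms(2) by (simp add: decseq_Suc_iff)
    then show ?thesis
      using 0 lasts_ge_self[OF assms(1), of g t] avoiding_zero[OF assms(1)] by simp
  next
    case (Suc k)
    have "\<eta> (int j) \<le> \<eta> (int k)"
      using Suc avoiding_antitone[OF assms(1), of k j] by simp
    then have "g (Suc t - j) * \<eta> (int j) \<le> g (t - k) * \<eta> (int k)"
      using Suc assms(3) by (simp add: mult_left_mono)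
    also have "\<dots> \<le> lasts \<eta> n g t"
      using j Suc by (intro lasts_ge_term) auto
    finally show ?thesis .
  qed
qed

text \<open>Every term is at most g (t - j), so n - 1 steps later the transform is below g.\<close>
lemma lasts_delayed_le:
  assumes "avoiding \<eta> n" "decseq g" "\<And>t. 0 \<le> g t"
  shows "lasts \<eta> n g (t + (n - 1)) \<le> g t"
proof (rule lasts_le)
  fix j assume j: "j \<le> min (t + (n - 1)) (n - 1)"
  have "g (t + (n - 1) - j) * \<eta> (int j) \<le> g (t + (n - 1) - j)"
    using assms(3) avoiding_range[OF assms(1)] by (simp add: mult_left_le)
  also have "\<dots> \<le> g t"
    using j assms(2) by (simp add: decseq_def)
  finally show "g (t + (n - 1) - j) * \<eta> (int j) \<le> g t" .
qed

text \<open>Squeezed between g (t + n - 1) and g t, the transform has the same limit as g.\<close>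
lemma lasts_tendsto:
  assumes "avoiding \<eta> n" "decseq g" "\<And>t. 0 \<le> g t" "g \<longlonglongrightarrow> l"
  shows "lasts \<eta> n g \<longlonglongrightarrow> l"
proof (rule LIMSEQ_offset[where k = "n - 1"])
  show "(\<lambda>t. lasts \<eta> n g (t + (n - 1))) \<longlonglongrightarrow> l"
  proof (rule tendsto_sandwich[of "\<lambda>t. g (t + (n - 1))" _ _ g])
    show "\<forall>\<^sub>F t in sequentially. g (t + (n - 1)) \<le> lasts \<eta> n g (t + (n - 1))"
      using lasts_ge_self[OF assms(1)] by simp
    show "\<forall>\<^sub>F t in sequentially. lasts \<eta> n g (t + (n - 1)) \<le> g t"
      using lasts_delayed_le[OF assms(1-3)] by simp
    show "(\<lambda>t. g (t + (n - 1))) \<longlonglongrightarrow> l"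
      by (rule LIMSEQ_ignore_initial_segment[OF assms(4)])
  qed (rule assms(4))
qed

text \<open>Each candidate of L_t is the candidate of AG_t for the window H = {0..t-j}.\<close>
lemma L_t_le_AG_t: "L_t T \<eta> n sat i t \<le> AG_t T \<eta> sat i t"
  unfolding L_t_eq_lasts
proof (rule lasts_le)
  fix j assume j: "j \<le> min t (n - 1)"
  let ?A = "{tnorm_set T (\<lambda>h. sat (i + h)) H * \<eta> (int j) | j H.
              j \<in> {0..t} \<and> H \<subseteq> {0..t} \<and> card H = t + 1 - j}"
  have "?A \<subseteq> (\<lambda>(j, H). tnorm_set T (\<lambda>h. sat (i + h)) H * \<eta> (int j)) ` ({0..t} \<times> Pow {0..t})"
    by auto
  then have "finite ?A"
    by (rule finite_subset) auto
  moreover have "G_t T sat i (t - j) * \<eta> (int j) \<in> ?A"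
    using j by (auto simp: G_t_shift[symmetric] intro!: exI[of _ j] exI[of _ "{0..t - j}"])
  ultimately show "G_t T sat i (t - j) * \<eta> (int j) \<le> AG_t T \<eta> sat i t"
    unfolding AG_t_def by (rule Max_ge)
qed

theorem proposition9:
  fixes T :: "real \<Rightarrow> real \<Rightarrow> real" and \<eta> :: "int \<Rightarrow> real" and n :: nat
    and sat :: "nat \<Rightarrow> real" and i :: nat
  assumes "tnorm T"
    and "avoiding \<eta> n"
    and "\<forall>j. sat j \<in> {0..1}"
  shows "decseq (\<lambda>t. L_t T \<eta> n sat i t)
       \<and> (\<lambda>t. L_t T \<eta> n sat i t) \<longlonglongrightarrow> G_op T sat i
       \<and> (\<forall>t. G_t T sat i t \<le> L_t T \<eta> n sat i t \<and> L_t T \<eta> n sat i t \<le> AG_t T \<eta> sat i t)"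
proof -
  let ?g = "G_t T sat i"
  have L: "(\<lambda>t. L_t T \<eta> n sat i t) = lasts \<eta> n ?g"
    by (simp add: L_t_eq_lasts)
  have dec: "decseq ?g" and nonneg: "\<And>t. 0 \<le> ?g t"
    using G_t_decseq[OF assms(1,3)] G_t_range[OF assms(1,3)] by auto
  show ?thesis
    unfolding L
    using lasts_decseq[OF assms(2) dec nonneg]
      lasts_tendsto[OF assms(2) dec nonneg G_t_tendsto_G_op[OF assms(1,3)]]
      lasts_ge_self[OF assms(2)] L_t_le_AG_t[of T \<eta> n sat i]
    by (simp add: L_t_eq_lasts)
qed

end
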